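(* Let a constant $\lambda>0$ and a function $\ell=\ell(n)=o(\log n)$ be given. If $n$ is large enough then, whenever $E_0$, $E_1$ and $\{e\}$ are disjoint sets of possible edges of $\tilde G=\tilde G(n,\ell,\lambda)$ with $|E_1|\le n^{1/3}$ such that $E_1\cup\{e\}$ contains no cycle of length at most $\ell$, we have \[ (1-n^{-1/4})\lambda/n\ \le\ \Pr\bigl(e\in E(\tilde G)\ \big|\ E_1\subset E(\tilde G)\subset E_0^{c}\bigr)\ \le\ \lambda/n . \]
   Context: $G(n,p)$ is the Erdős–Rényi random graph on vertex set $[n]$ with each possible edge present independently with probability $p$. $\tilde G(n,\ell,\lambda)$ is the random graph whose distribution is that of $G(n,\lambda/n)$ conditioned on containing no cycle of length at most $\ell$. $E_0^{c}$ denotes the complement of $E_0$ in the set of all possible edges. *)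

theory Defs
  imports "HOL-Analysis.Analysis" "HOL-Library.Landau_Symbols"
begin

definition all_edges :: "nat \<Rightarrow> nat set set" where
  "all_edges n = {e. \<exists>u v. u \<in> {1..n} \<and> v \<in> {1..n} \<and> u \<noteq> v \<and> e = {u, v}}"

definition has_short_cycle :: "nat \<Rightarrow> nat set set \<Rightarrow> bool" where
  "has_short_cycle l E \<longleftrightarrow> (\<exists>vs :: nat list. 3 \<le> length vs \<and> length vs \<le> l \<and> distinct vs \<and>
      (\<forall>i < length vs. {vs ! i, vs ! ((i + 1) mod length vs)} \<in> E))"

definition gnp_weight :: "nat \<Rightarrow> real \<Rightarrow> nat set set \<Rightarrow> real" where
  "gnp_weight n p E = p ^ card E * (1 - p) ^ (card (all_edges n) - card E)"

text \<open>Probability of an event P under \<tilde>G(n,l,lam), i.e. G(n, lam/n) conditioned on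
  containing no cycle of length at most l.\<close>
definition Gt_prob :: "nat \<Rightarrow> nat \<Rightarrow> real \<Rightarrow> (nat set set \<Rightarrow> bool) \<Rightarrow> real" where
  "Gt_prob n l lam P =
     (\<Sum>E \<in> {E. E \<subseteq> all_edges n \<and> \<not> has_short_cycle l E \<and> P E}. gnp_weight n (lam / real n) E) /
     (\<Sum>E \<in> {E. E \<subseteq> all_edges n \<and> \<not> has_short_cycle l E}. gnp_weight n (lam / real n) E)"

definition Gt_cond_prob :: "nat \<Rightarrow> nat \<Rightarrow> real \<Rightarrow> (nat set set \<Rightarrow> bool) \<Rightarrow> (nat set set \<Rightarrow> bool) \<Rightarrow> real" where
  "Gt_cond_prob n l lam P Q = Gt_prob n l lam (\<lambda>E. P E \<and> Q E) / Gt_prob n l lam Q"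

end

theory Submission
  imports Defs
begin

(* The conditional probability equals A / (A + B), where A and B are the G(n,p)-weights of the
   graphs of the conditioning family that do and do not contain e. Deleting e maps the first
   family into the second and divides the weight by r = p / (1 - p), so A <= r B, i.e. the
   probability is at most p. Conversely, adding e to a graph of the second family keeps it in the
   family unless e closes a cycle of length at most l. Such a graph contains a path of fewer than
   l edges joining the ends of e and not lying inside E1; its edges outside E1 form a walk that
   may jump inside W, the vertex set of E1 + e. There are at most |W|^2 (n + |W|^2)^j such walks
   with j + 1 edges, and the graphs containing a fixed one weigh at most r^(j+1) B. Hence
   A >= r (1 - D) B with D <= 32 lam C^l n^(-1/3) for C = 34 lam + 2, and C^l = n^o(1) because
   l = o(log n). *)

lemma finite_all_edges: "finite (all_edges n)"
proof (rule finite_subset)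
  show "all_edges n \<subseteq> Pow {1..n}" unfolding all_edges_def by auto
qed simp

lemma Union_all_edges: "\<Union>(all_edges n) \<subseteq> {1..n}"
  unfolding all_edges_def by auto

lemma card_all_edges_mem: "f \<in> all_edges n \<Longrightarrow> card f = 2"
  unfolding all_edges_def by auto

lemma card_Union_edges_le:
  assumes "E \<subseteq> all_edges n"
  shows "card (\<Union>E) \<le> 2 * card E"
proof -
  have "card (\<Union>E) \<le> sum card E" by (rule card_Union_le_sum_card)
  also have "\<dots> = 2 * card E"
    using assms card_all_edges_mem by (subst sum.cong[OF refl, of _ _ "\<lambda>_. 2"]) auto
  finally show ?thesis .
qed

section \<open>Paths and short cycles\<close>

fun path_edges :: "'a list \<Rightarrow> 'a set list" where
  "path_edges (x # y # r) = {x, y} # path_edges (y # r)"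
| "path_edges _ = []"

lemma length_path_edges [simp]: "length (path_edges xs) = length xs - 1"
  by (induction xs rule: path_edges.induct) auto

lemma nth_path_edges: "Suc i < length xs \<Longrightarrow> path_edges xs ! i = {xs ! i, xs ! Suc i}"
  by (induction xs arbitrary: i rule: path_edges.induct) (auto simp: nth_Cons split: nat.split)

lemma set_path_edges: "set (path_edges xs) = {{xs ! i, xs ! Suc i} | i. Suc i < length xs}"
proof -
  have "set (path_edges xs) = {path_edges xs ! i | i. Suc i < length xs}"
    by (auto simp: set_conv_nth less_diff_conv)
  also have "\<dots> = {{xs ! i, xs ! Suc i} | i. Suc i < length xs}"
    by (metis nth_path_edges)
  finally show ?thesis .
qed

lemma path_edges_Cons: "xs \<noteq> [] \<Longrightarrow> path_edges (x # xs) = {x, hd xs} # path_edges xs"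
  by (cases xs) simp_all

lemma path_edges_snoc: "xs \<noteq> [] \<Longrightarrow> path_edges (xs @ [y]) = path_edges xs @ [{last xs, y}]"
  by (induction xs rule: path_edges.induct) auto

lemma path_edges_subset: "f \<in> set (path_edges xs) \<Longrightarrow> f \<subseteq> set xs"
  by (induction xs rule: path_edges.induct) auto

lemma path_in_edges_hd_mem:
  assumes "xs \<noteq> []" "set (path_edges xs) \<subseteq> E1" "\<Union>E1 \<subseteq> W" "last xs \<in> W"
  shows "hd xs \<in> W"
proof (cases "length xs \<le> 1")
  case True
  then show ?thesis using assms(1,4) by (cases xs) auto
next
  case False
  then have "{xs ! 0, xs ! 1} \<in> E1"
    using assms(2) unfolding set_path_edges by force
  then have "xs ! 0 \<in> W"
    using assms(3) by blast
  then show ?thesis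
    using assms(1) by (simp add: hd_conv_nth)
qed

definition cycle_edges :: "'a list \<Rightarrow> 'a set set" where
  "cycle_edges vs = insert {last vs, hd vs} (set (path_edges vs))"

lemma cycle_edges_conv_nth:
  assumes "vs \<noteq> []"
  shows "cycle_edges vs = {{vs ! i, vs ! (Suc i mod length vs)} | i. i < length vs}"
proof -
  define k where "k = length vs"
  have k: "0 < k" using assms k_def by simp
  have "{{vs ! i, vs ! (Suc i mod k)} | i. i < k} =
      insert {vs ! (k - 1), vs ! 0} {{vs ! i, vs ! Suc i} | i. Suc i < k}"
  proof (intro equalityI subsetI)
    fix f assume "f \<in> {{vs ! i, vs ! (Suc i mod k)} | i. i < k}"
    then obtain i where "i < k" "f = {vs ! i, vs ! (Suc i mod k)}" by blast
    then show "f \<in> insert {vs ! (k - 1), vs ! 0} {{vs ! i, vs ! Suc i} | i. Suc i < k}"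
      by (cases "Suc i = k") auto
  next
    fix f assume "f \<in> insert {vs ! (k - 1), vs ! 0} {{vs ! i, vs ! Suc i} | i. Suc i < k}"
    then consider "f = {vs ! (k - 1), vs ! 0}" | i where "Suc i < k" "f = {vs ! i, vs ! Suc i}"
      by blast
    then show "f \<in> {{vs ! i, vs ! (Suc i mod k)} | i. i < k}"
    proof cases
      case 1
      then show ?thesis using k by (auto intro!: exI[of _ "k - 1"])
    qed auto
  qed
  then show ?thesis
    using assms unfolding cycle_edges_def set_path_edges k_def by (simp add: last_conv_nth hd_conv_nth)
qed

lemma has_short_cycle_iff_cycle_edges:
  "has_short_cycle l E \<longleftrightarrow> (\<exists>vs. 3 \<le> length vs \<and> length vs \<le> l \<and> distinct vs \<and> cycle_edges vs \<subseteq> E)"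
proof -
  have "cycle_edges vs \<subseteq> E \<longleftrightarrow> (\<forall>i < length vs. {vs ! i, vs ! ((i + 1) mod length vs)} \<in> E)"
    if "3 \<le> length vs" for vs :: "nat list"
    using that by (subst cycle_edges_conv_nth) auto
  then show ?thesis
    unfolding has_short_cycle_def by (metis (no_types, lifting))
qed

lemma has_short_cycle_mono: "E \<subseteq> E' \<Longrightarrow> has_short_cycle l E \<Longrightarrow> has_short_cycle l E'"
  unfolding has_short_cycle_def by blast

lemma cycle_edges_rotate1 [simp]: "cycle_edges (rotate1 vs) = cycle_edges vs"
proof (cases vs)
  case (Cons x xs)
  show ?thesis
  proof (cases "xs = []")
    case False
    then show ?thesis
      using Cons by (auto simp: cycle_edges_def path_edges_snoc path_edges_Cons)
  qed (simp add: Cons)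
qed simp

lemma cycle_edges_rotate [simp]: "cycle_edges (rotate m vs) = cycle_edges vs"
  by (induction m) simp_all

lemma cycle_edge_closes_rotation:
  assumes "f \<in> cycle_edges vs"
  obtains m where "f = {last (rotate m vs), hd (rotate m vs)}"
proof (cases "f = {last vs, hd vs}")
  case True
  then show ?thesis using that[of 0] by simp
next
  case False
  then obtain i where i: "Suc i < length vs" "f = {vs ! i, vs ! Suc i}"
    using assms unfolding cycle_edges_def set_path_edges by blast
  have "last (rotate (Suc i) vs) = vs ! i"
    using i by (simp add: rotate_drop_take take_Suc_conv_app_nth)
  moreover have "hd (rotate (Suc i) vs) = vs ! Suc i"
    using i by (subst hd_rotate_conv_nth) auto
  ultimately show ?thesis using i that[of "Suc i"] by (simp add: insert_commute)
qed

lemma closing_edge_notin_path_edges: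
  assumes "distinct ws" "3 \<le> length ws"
  shows "{last ws, hd ws} \<notin> set (path_edges ws)"
proof
  assume "{last ws, hd ws} \<in> set (path_edges ws)"
  moreover have "ws \<noteq> []" using assms(2) by auto
  ultimately obtain i where i: "Suc i < length ws" "{ws ! (length ws - 1), ws ! 0} = {ws ! i, ws ! Suc i}"
    unfolding set_path_edges by (auto simp: last_conv_nth hd_conv_nth)
  have index_eq: "ws ! a = ws ! b \<longleftrightarrow> a = b" if "a < length ws" "b < length ws" for a b
    using nth_eq_iff_index_eq[OF assms(1) that] .
  have lt: "length ws - 1 < length ws" "0 < length ws" "i < length ws"
    using i(1) by auto
  from i(2) consider "ws ! (length ws - 1) = ws ! i" | "ws ! 0 = ws ! i" "ws ! (length ws - 1) = ws ! Suc i"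
    by (auto simp: doubleton_eq_iff)
  then show False
  proof cases
    case 1
    then show False using index_eq[of "length ws - 1" i] lt i(1) by linarith
  next
    case 2
    then show False using index_eq[of 0 i] index_eq[of "length ws - 1" "Suc i"] lt i(1) assms(2) by linarith
  qed
qed

lemma short_cycle_through_new_edge:
  assumes "has_short_cycle l (insert e E)" "\<not> has_short_cycle l E" "\<not> has_short_cycle l (insert e E1)"
  obtains ws where "distinct ws" "length ws \<le> l" "e = {last ws, hd ws}"
    "set (path_edges ws) \<subseteq> E" "\<not> set (path_edges ws) \<subseteq> E1"
proof -
  obtain vs where vs: "3 \<le> length vs" "length vs \<le> l" "distinct vs" "cycle_edges vs \<subseteq> insert e E"
    using assms(1) unfolding has_short_cycle_iff_cycle_edges by blast
  then have "e \<in> cycle_edges vs"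
    using assms(2) unfolding has_short_cycle_iff_cycle_edges by blast
  then obtain m where e: "e = {last (rotate m vs), hd (rotate m vs)}"
    by (rule cycle_edge_closes_rotation)
  define ws where "ws = rotate m vs"
  have ws: "3 \<le> length ws" "length ws \<le> l" "distinct ws" "cycle_edges ws \<subseteq> insert e E"
    using vs unfolding ws_def by simp_all
  have "e \<notin> set (path_edges ws)"
    using closing_edge_notin_path_edges[OF ws(3,1)] e ws_def by simp
  then have "set (path_edges ws) \<subseteq> E"
    using ws(4) unfolding cycle_edges_def by blast
  moreover have "\<not> set (path_edges ws) \<subseteq> E1"
  proof
    assume "set (path_edges ws) \<subseteq> E1"
    then have "cycle_edges ws \<subseteq> insert e E1"
      using e ws_def unfolding cycle_edges_def by auto
    then show False
      using assms(3) ws unfolding has_short_cycle_iff_cycle_edges by blast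
  qed
  ultimately show ?thesis
    using that ws e ws_def by blast
qed

section \<open>Jump walks\<close>

definition jump_targets :: "'a set \<Rightarrow> 'a \<Rightarrow> 'a set" where
  "jump_targets W b = (if b \<in> W then W else {b})"

(* The edges outside E1 of a path are encoded as pairs (a_0, b_0), ..., (a_j, b_j) with
   b_j in W and a_(i+1) = b_i unless b_i lies in W, in which case a_(i+1) is any vertex of W:
   every maximal E1-segment of the path has both ends in W. *)
fun jump_walks :: "'a set \<Rightarrow> 'a set \<Rightarrow> nat \<Rightarrow> 'a \<Rightarrow> ('a \<times> 'a) list set" where
  "jump_walks V W 0 a = (\<lambda>b. [(a, b)]) ` W"
| "jump_walks V W (Suc j) a = (\<Union>b\<in>V. \<Union>a'\<in>jump_targets W b. (#) (a, b) ` jump_walks V W j a')"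

definition walk_edges :: "('a \<times> 'a) list \<Rightarrow> 'a set list" where
  "walk_edges c = map (\<lambda>(x, y). {x, y}) c"

lemma length_walk_edges [simp]: "length (walk_edges c) = length c"
  by (simp add: walk_edges_def)

lemma length_jump_walks: "c \<in> jump_walks V W j a \<Longrightarrow> length c = Suc j"
  by (induction j arbitrary: a c) auto

lemma finite_jump_walks: "finite V \<Longrightarrow> finite W \<Longrightarrow> finite (jump_walks V W j a)"
  by (induction j arbitrary: a) (auto simp: jump_targets_def)

lemma sum_card_jump_targets:
  assumes "finite V" "finite W"
  shows "(\<Sum>b\<in>V. card (jump_targets W b)) \<le> card V + card W ^ 2"
proof -
  have "(\<Sum>b\<in>V. card (jump_targets W b)) \<le> (\<Sum>b\<in>V. 1 + (if b \<in> W then card W else 0))"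
    by (intro sum_mono) (auto simp: jump_targets_def)
  also have "\<dots> = card V + card (V \<inter> W) * card W"
    by (simp only: sum.distrib sum.If_cases[OF assms(1)]) (simp add: Int_def)
  also have "\<dots> \<le> card V + card W ^ 2"
    using assms(2) by (simp add: power2_eq_square card_mono)
  finally show ?thesis .
qed

lemma card_jump_walks_le:
  assumes "finite V" "finite W"
  shows "card (jump_walks V W j a) \<le> card W * (card V + card W ^ 2) ^ j"
proof (induction j arbitrary: a)
  case 0
  then show ?case by (simp add: card_image_le assms(2))
next
  case (Suc j)
  define K where "K = card W * (card V + card W ^ 2) ^ j"
  have "card (jump_walks V W (Suc j) a) \<le>
      (\<Sum>b\<in>V. \<Sum>a'\<in>jump_targets W b. card ((#) (a, b) ` jump_walks V W j a'))"
    using assms by (auto intro!: card_UN_le[THEN order_trans] sum_mono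
        simp: jump_targets_def finite_jump_walks)
  also have "\<dots> \<le> (\<Sum>b\<in>V. \<Sum>a'\<in>jump_targets W b. K)"
    unfolding K_def by (intro sum_mono card_image_le[THEN order_trans] Suc.IH)
      (simp add: assms finite_jump_walks)
  also have "\<dots> = (\<Sum>b\<in>V. card (jump_targets W b)) * K"
    by (simp add: sum_distrib_right)
  also have "\<dots> \<le> (card V + card W ^ 2) * K"
    using sum_card_jump_targets[OF assms] by (rule mult_right_mono) simp
  finally show ?case
    unfolding K_def by (simp add: algebra_simps)
qed

lemma card_UN_jump_walks_le:
  assumes "finite V" "finite W"
  shows "real (card (\<Union>a\<in>W. jump_walks V W j a)) \<le> real (card W) ^ 2 * (real (card V) + real (card W) ^ 2) ^ j"
proof -
  have "card (\<Union>a\<in>W. jump_walks V W j a) \<le> (\<Sum>a\<in>W. card (jump_walks V W j a))"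
    using assms(2) by (rule card_UN_le)
  also have "\<dots> \<le> (\<Sum>a\<in>W. card W * (card V + card W ^ 2) ^ j)"
    using card_jump_walks_le[OF assms] by (rule sum_mono)
  finally show ?thesis
    by (simp flip: of_nat_power of_nat_mult of_nat_add add: power2_eq_square mult_ac)
qed

lemma jump_walk_of_path:
  assumes "distinct xs" "\<Union>(set (path_edges xs)) \<subseteq> V" "last xs \<in> W" "\<Union>E1 \<subseteq> W"
    "\<not> set (path_edges xs) \<subseteq> E1"
  shows "\<exists>j a c. c \<in> jump_walks V W j a \<and> a \<in> jump_targets W (hd xs) \<and>
    set (walk_edges c) \<subseteq> set (path_edges xs) - E1 \<and> distinct (walk_edges c) \<and> Suc j < length xs"
  using assms
proof (induction xs rule: path_edges.induct)
  case (1 x y r)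
  show ?case
  proof (cases "set (path_edges (y # r)) \<subseteq> E1")
    case True
    then have xy: "{x, y} \<notin> E1" using "1.prems"(5) by simp
    have "y \<in> W"
      using path_in_edges_hd_mem[OF _ True "1.prems"(4)] "1.prems"(3) by simp
    then have "[(x, y)] \<in> jump_walks V W 0 x" by simp
    then show ?thesis
      using xy by (intro exI[of _ 0] exI[of _ x] exI[of _ "[(x, y)]"]) (auto simp: walk_edges_def jump_targets_def)
  next
    case False
    obtain j a c where c: "c \<in> jump_walks V W j a" "a \<in> jump_targets W y"
      "set (walk_edges c) \<subseteq> set (path_edges (y # r)) - E1" "distinct (walk_edges c)" "Suc j < length (y # r)"
      using "1.IH" "1.prems" False by auto
    show ?thesis
    proof (cases "{x, y} \<in> E1")
      case True
      then have "x \<in> W" "y \<in> W" using "1.prems"(4) by auto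
      then show ?thesis
        using c by (intro exI[of _ j] exI[of _ a] exI[of _ c]) (auto simp: jump_targets_def)
    next
      case xy: False
      have "y \<in> V" using "1.prems"(2) by auto
      then have "(x, y) # c \<in> jump_walks V W (Suc j) x"
        using c(1,2) by auto
      moreover have "{x, y} \<notin> set (walk_edges c)"
        using c(3) "1.prems"(1) path_edges_subset[of "{x, y}" "y # r"] by auto
      ultimately show ?thesis
        using c xy by (intro exI[of _ "Suc j"] exI[of _ x] exI[of _ "(x, y) # c"])
          (auto simp: walk_edges_def jump_targets_def)
    qed
  qed
qed simp_all

lemma short_cycle_closing_jump_walk:
  fixes E E1 :: "nat set set" and e :: "nat set"
  defines "W \<equiv> \<Union>(insert e E1)"
  assumes E: "E \<subseteq> all_edges n" "\<not> has_short_cycle l E" "has_short_cycle l (insert e E)"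
    and acyclic: "\<not> has_short_cycle l (insert e E1)"
  obtains j a c where "j < l" "a \<in> W" "c \<in> jump_walks {1..n} W j a"
    "distinct (walk_edges c)" "set (walk_edges c) \<subseteq> E - E1"
proof -
  obtain ws where ws: "distinct ws" "length ws \<le> l" "e = {last ws, hd ws}"
    "set (path_edges ws) \<subseteq> E" "\<not> set (path_edges ws) \<subseteq> E1"
    using short_cycle_through_new_edge[OF E(3,2) acyclic] by blast
  have vertices: "\<Union>(set (path_edges ws)) \<subseteq> {1..n}"
    using ws(4) E(1) Union_all_edges by blast
  have W: "last ws \<in> W" "hd ws \<in> W" "\<Union>E1 \<subseteq> W"
    using ws(3) unfolding W_def by auto
  obtain j a c where c: "c \<in> jump_walks {1..n} W j a" "a \<in> jump_targets W (hd ws)"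
    "set (walk_edges c) \<subseteq> set (path_edges ws) - E1" "distinct (walk_edges c)" "Suc j < length ws"
    using jump_walk_of_path[OF ws(1) vertices W(1,3) ws(5)] by (elim exE conjE)
  show ?thesis
  proof (rule that)
    show "j < l"
      using c(5) ws(2) by simp
    show "a \<in> W"
      using c(2) W(2) unfolding jump_targets_def by simp
    show "set (walk_edges c) \<subseteq> E - E1"
      using c(3) ws(4) by blast
  qed (use c in auto)
qed

section \<open>Weights of G(n,p)\<close>

definition short_cycle_free :: "nat \<Rightarrow> nat \<Rightarrow> nat set set set" where
  "short_cycle_free n l = {E. E \<subseteq> all_edges n \<and> \<not> has_short_cycle l E}"

lemma short_cycle_free_subset_Pow: "short_cycle_free n l \<subseteq> Pow (all_edges n)"
  unfolding short_cycle_free_def by blast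

lemma empty_in_short_cycle_free: "{} \<in> short_cycle_free n l"
  unfolding short_cycle_free_def has_short_cycle_def by fastforce

lemma finite_short_cycle_free_subset: "F \<subseteq> short_cycle_free n l \<Longrightarrow> finite F"
  using short_cycle_free_subset_Pow finite_all_edges by (metis finite_Pow_iff finite_subset)

lemma gnp_weight_nonneg: "0 \<le> p \<Longrightarrow> p \<le> 1 \<Longrightarrow> 0 \<le> gnp_weight n p E"
  unfolding gnp_weight_def by simp

lemma gnp_weight_pos: "0 < p \<Longrightarrow> p < 1 \<Longrightarrow> 0 < gnp_weight n p E"
  unfolding gnp_weight_def by simp

lemma gnp_weight_Un:
  assumes "E \<union> S \<subseteq> all_edges n" "E \<inter> S = {}" "p \<noteq> 1"
  shows "gnp_weight n p (E \<union> S) = (p / (1 - p)) ^ card S * gnp_weight n p E"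
proof -
  define N where "N = card (all_edges n)"
  have fin: "finite E" "finite S"
    using assms(1) finite_all_edges finite_subset by auto
  then have card_Un: "card (E \<union> S) = card E + card S"
    using assms(2) by (simp add: card_Un_disjoint)
  moreover have "card (E \<union> S) \<le> N"
    unfolding N_def using assms(1) finite_all_edges by (rule card_mono[rotated])
  ultimately have "N - card E = (N - card (E \<union> S)) + card S"
    by linarith
  moreover have "(p / (1 - p)) ^ card S * (1 - p) ^ card S = p ^ card S"
    using assms(3) by (simp add: power_divide)
  ultimately show ?thesis
    unfolding gnp_weight_def N_def[symmetric] card_Un by (simp add: power_add algebra_simps)
qed

lemma sum_gnp_weight_Diff_le:
  assumes "\<And>E. E \<in> F \<Longrightarrow> S \<subseteq> E \<and> E - S \<in> G" "F \<subseteq> Pow (all_edges n)" "G \<subseteq> Pow (all_edges n)"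
    "0 \<le> p" "p < 1"
  shows "sum (gnp_weight n p) F \<le> (p / (1 - p)) ^ card S * sum (gnp_weight n p) G"
proof -
  have "sum (gnp_weight n p) F = (\<Sum>E\<in>F. (p / (1 - p)) ^ card S * gnp_weight n p (E - S))"
  proof (intro sum.cong refl)
    fix E assume "E \<in> F"
    then show "gnp_weight n p E = (p / (1 - p)) ^ card S * gnp_weight n p (E - S)"
      using assms(1,2,5) gnp_weight_Un[of "E - S" S n p] by (auto simp: Un_absorb2)
  qed
  also have "\<dots> = (p / (1 - p)) ^ card S * sum (gnp_weight n p) ((\<lambda>E. E - S) ` F)"
  proof -
    have "inj_on (\<lambda>E. E - S) F"
      using assms(1) by (intro inj_on_inverseI[where g = "\<lambda>X. X \<union> S"]) blast
    then show ?thesis by (simp add: sum.reindex sum_distrib_left)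
  qed
  also have "\<dots> \<le> (p / (1 - p)) ^ card S * sum (gnp_weight n p) G"
    using assms finite_all_edges
    by (intro mult_left_mono sum_mono2) (auto intro: gnp_weight_nonneg finite_subset)
  finally show ?thesis .
qed

lemma sum_gnp_weight_superset_le:
  assumes "F \<subseteq> Pow (all_edges n)" "\<And>E. E \<in> F \<Longrightarrow> S \<subseteq> E \<Longrightarrow> E - S \<in> F" "0 \<le> p" "p < 1"
  shows "sum (gnp_weight n p) {E \<in> F. S \<subseteq> E} \<le> (p / (1 - p)) ^ card S * sum (gnp_weight n p) F"
  using assms by (intro sum_gnp_weight_Diff_le) auto

lemma sum_gnp_weight_Un_ge:
  assumes "\<And>E. E \<in> G \<Longrightarrow> E \<inter> S = {} \<and> E \<union> S \<in> F" "F \<subseteq> Pow (all_edges n)"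
    "0 \<le> p" "p < 1"
  shows "(p / (1 - p)) ^ card S * sum (gnp_weight n p) G \<le> sum (gnp_weight n p) F"
proof -
  have "(p / (1 - p)) ^ card S * sum (gnp_weight n p) G = (\<Sum>E\<in>G. gnp_weight n p (E \<union> S))"
  proof (unfold sum_distrib_left, intro sum.cong refl)
    fix E assume "E \<in> G"
    then show "(p / (1 - p)) ^ card S * gnp_weight n p E = gnp_weight n p (E \<union> S)"
      using assms(1,2,4) by (subst gnp_weight_Un) auto
  qed
  also have "\<dots> = sum (gnp_weight n p) ((\<lambda>E. E \<union> S) ` G)"
  proof -
    have "inj_on (\<lambda>E. E \<union> S) G"
      using assms(1) by (intro inj_on_inverseI[where g = "\<lambda>X. X - S"]) blast
    then show ?thesis by (simp add: sum.reindex)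
  qed
  also have "\<dots> \<le> sum (gnp_weight n p) F"
    using assms finite_all_edges
    by (intro sum_mono2) (auto intro: gnp_weight_nonneg finite_subset)
  finally show ?thesis .
qed

lemma sum_UN_le:
  fixes f :: "'a \<Rightarrow> 'b::ordered_comm_monoid_add"
  assumes "finite I" "\<And>i. i \<in> I \<Longrightarrow> finite (A i)" "\<And>x. 0 \<le> f x"
  shows "sum f (\<Union>i\<in>I. A i) \<le> (\<Sum>i\<in>I. sum f (A i))"
proof -
  have "sum f (\<Union>i\<in>I. A i) = sum f (snd ` Sigma I A)"
    by (rule arg_cong[where f = "sum f"]) force
  also have "\<dots> \<le> sum (f \<circ> snd) (Sigma I A)"
    using assms by (intro sum_image_le) auto
  also have "\<dots> = (\<Sum>i\<in>I. sum f (A i))"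
    using assms by (simp add: sum.Sigma split_beta')
  finally show ?thesis .
qed

lemma sum_gnp_weight_union_bound:
  fixes C :: "nat \<Rightarrow> 'c set" and S :: "'c \<Rightarrow> nat set set"
  assumes F: "F \<subseteq> Pow (all_edges n)"
    and closed: "\<And>j c E. j < L \<Longrightarrow> c \<in> C j \<Longrightarrow> E \<in> F \<Longrightarrow> S c \<subseteq> E \<Longrightarrow> E - S c \<in> F"
    and card_S: "\<And>j c. j < L \<Longrightarrow> c \<in> C j \<Longrightarrow> card (S c) = Suc j"
    and fin_C: "\<And>j. finite (C j)"
    and cover: "G \<subseteq> (\<Union>j<L. \<Union>c\<in>C j. {E \<in> F. S c \<subseteq> E})"
    and p: "0 \<le> p" "p < 1"
  shows "sum (gnp_weight n p) G \<le> (\<Sum>j<L. real (card (C j)) * (p / (1 - p)) ^ Suc j) * sum (gnp_weight n p) F"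
proof -
  let ?w = "gnp_weight n p"
  have fin_F: "finite F"
    using F finite_all_edges by (metis finite_Pow_iff finite_subset)
  have w_nonneg: "0 \<le> ?w E" for E
    using p by (intro gnp_weight_nonneg) auto
  have fin_UN: "finite (\<Union>c\<in>C j. {E \<in> F. S c \<subseteq> E})" for j
    using fin_C fin_F by auto
  have "sum ?w G \<le> sum ?w (\<Union>j<L. \<Union>c\<in>C j. {E \<in> F. S c \<subseteq> E})"
    using cover fin_UN w_nonneg by (intro sum_mono2) auto
  also have "\<dots> \<le> (\<Sum>j<L. sum ?w (\<Union>c\<in>C j. {E \<in> F. S c \<subseteq> E}))"
    using fin_UN w_nonneg by (intro sum_UN_le) auto
  also have "\<dots> \<le> (\<Sum>j<L. \<Sum>c\<in>C j. sum ?w {E \<in> F. S c \<subseteq> E})"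
    using fin_C fin_F w_nonneg by (intro sum_mono sum_UN_le) auto
  also have "\<dots> \<le> (\<Sum>j<L. \<Sum>c\<in>C j. (p / (1 - p)) ^ Suc j * sum ?w F)"
  proof (intro sum_mono)
    fix j c assume "j \<in> {..<L}" "c \<in> C j"
    then have "sum ?w {E \<in> F. S c \<subseteq> E} \<le> (p / (1 - p)) ^ card (S c) * sum ?w F"
      using F closed p by (intro sum_gnp_weight_superset_le) auto
    then show "sum ?w {E \<in> F. S c \<subseteq> E} \<le> (p / (1 - p)) ^ Suc j * sum ?w F"
      using card_S \<open>j \<in> {..<L}\<close> \<open>c \<in> C j\<close> by simp
  qed
  also have "\<dots> = (\<Sum>j<L. real (card (C j)) * (p / (1 - p)) ^ Suc j) * sum ?w F"
    unfolding sum_distrib_right by (intro sum.cong refl) (simp only: sum_constant mult.assoc)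
  finally show ?thesis .
qed

lemma sum_gnp_weight_closing_cycle_le:
  fixes F :: "nat set set set" and E1 :: "nat set set" and e :: "nat set" and n l :: nat and p :: real
  defines "W \<equiv> \<Union>(insert e E1)"
  assumes F: "F \<subseteq> short_cycle_free n l"
    and closed: "\<And>E S. E \<in> F \<Longrightarrow> S \<subseteq> E - E1 \<Longrightarrow> E - S \<in> F"
    and edges: "insert e E1 \<subseteq> all_edges n" and acyclic: "\<not> has_short_cycle l (insert e E1)"
    and p: "0 \<le> p" "p < 1"
  shows "sum (gnp_weight n p) {E \<in> F. has_short_cycle l (insert e E)}
    \<le> (\<Sum>j<l. real (card W) ^ 2 * (real n + real (card W) ^ 2) ^ j * (p / (1 - p)) ^ Suc j)
        * sum (gnp_weight n p) F"
proof -
  define C where "C j = {c \<in> (\<Union>a\<in>W. jump_walks {1..n} W j a).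
    distinct (walk_edges c) \<and> set (walk_edges c) \<inter> E1 = {}}" for j
  have "W \<subseteq> {1..n}"
    unfolding W_def using edges Union_all_edges by blast
  then have fin_W: "finite W"
    by (rule finite_subset) simp
  have card_C: "real (card (C j)) \<le> real (card W) ^ 2 * (real n + real (card W) ^ 2) ^ j" for j
  proof -
    have "card (C j) \<le> card (\<Union>a\<in>W. jump_walks {1..n} W j a)"
      unfolding C_def using fin_W by (intro card_mono) (auto simp: finite_jump_walks)
    then have "real (card (C j)) \<le> real (card (\<Union>a\<in>W. jump_walks {1..n} W j a))"
      by simp
    then show ?thesis
      using card_UN_jump_walks_le[OF _ fin_W, of "{1..n}" j] by simp
  qed
  have "sum (gnp_weight n p) {E \<in> F. has_short_cycle l (insert e E)}
    \<le> (\<Sum>j<l. real (card (C j)) * (p / (1 - p)) ^ Suc j) * sum (gnp_weight n p) F"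
  proof (rule sum_gnp_weight_union_bound[where S = "\<lambda>c. set (walk_edges c)"])
    show "{E \<in> F. has_short_cycle l (insert e E)} \<subseteq> (\<Union>j<l. \<Union>c\<in>C j. {E \<in> F. set (walk_edges c) \<subseteq> E})"
    proof safe
      fix E assume E: "E \<in> F" "has_short_cycle l (insert e E)"
      then have "E \<subseteq> all_edges n" "\<not> has_short_cycle l E"
        using F unfolding short_cycle_free_def by auto
      then obtain j a c where "j < l" "a \<in> W" "c \<in> jump_walks {1..n} W j a"
        "distinct (walk_edges c)" "set (walk_edges c) \<subseteq> E - E1"
        by (rule short_cycle_closing_jump_walk[OF _ _ E(2) acyclic, folded W_def])
      with E(1) show "E \<in> (\<Union>j<l. \<Union>c\<in>C j. {E \<in> F. set (walk_edges c) \<subseteq> E})"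
        unfolding C_def by blast
    qed
  next
    show "F \<subseteq> Pow (all_edges n)"
      using F short_cycle_free_subset_Pow by blast
  next
    fix j c E assume "c \<in> C j" "E \<in> F" "set (walk_edges c) \<subseteq> E"
    then show "E - set (walk_edges c) \<in> F"
      unfolding C_def by (intro closed) auto
  qed (use p fin_W in \<open>auto simp: C_def distinct_card length_jump_walks finite_jump_walks\<close>)
  also have "\<dots> \<le> (\<Sum>j<l. real (card W) ^ 2 * (real n + real (card W) ^ 2) ^ j * (p / (1 - p)) ^ Suc j)
        * sum (gnp_weight n p) F"
    using card_C p by (intro mult_right_mono sum_mono sum_nonneg gnp_weight_nonneg) auto
  finally show ?thesis .
qed

lemma edge_weight_odds_bounds:
  fixes F :: "nat set set set" and E1 :: "nat set set" and e :: "nat set" and n l :: nat and p :: real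
  defines "W \<equiv> \<Union>(insert e E1)"
  defines "D \<equiv> (\<Sum>j<l. real (card W) ^ 2 * (real n + real (card W) ^ 2) ^ j * (p / (1 - p)) ^ Suc j)"
  defines "A \<equiv> sum (gnp_weight n p) {E \<in> F. e \<in> E}" and "B \<equiv> sum (gnp_weight n p) {E \<in> F. e \<notin> E}"
  assumes F: "F \<subseteq> short_cycle_free n l"
    and remove: "\<And>E S. E \<in> F \<Longrightarrow> S \<subseteq> E - E1 \<Longrightarrow> E - S \<in> F"
    and add: "\<And>E. E \<in> F \<Longrightarrow> \<not> has_short_cycle l (insert e E) \<Longrightarrow> insert e E \<in> F"
    and e: "e \<notin> E1" "insert e E1 \<subseteq> all_edges n" "\<not> has_short_cycle l (insert e E1)"
    and p: "0 \<le> p" "p < 1"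
  shows "A \<le> p / (1 - p) * B" and "p / (1 - p) * ((1 - D) * B) \<le> A"
proof -
  let ?w = "gnp_weight n p"
  define Good where "Good = {E \<in> F. e \<notin> E \<and> \<not> has_short_cycle l (insert e E)}"
  define Bad where "Bad = {E \<in> {E \<in> F. e \<notin> E}. has_short_cycle l (insert e E)}"
  have Pow: "F \<subseteq> Pow (all_edges n)"
    using F short_cycle_free_subset_Pow by blast
  have "A \<le> (p / (1 - p)) ^ card {e} * B"
    unfolding A_def B_def using Pow e(1) p by (intro sum_gnp_weight_Diff_le) (auto intro: remove)
  then show "A \<le> p / (1 - p) * B"
    by simp
  have "(p / (1 - p)) ^ card {e} * sum ?w Good \<le> A"
    unfolding A_def Good_def using Pow p by (intro sum_gnp_weight_Un_ge) (auto dest: add)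
  then have Good_le: "p / (1 - p) * sum ?w Good \<le> A"
    by simp
  have "sum ?w Bad \<le> D * B"
    unfolding Bad_def D_def B_def W_def using F e(2,3) p
    by (intro sum_gnp_weight_closing_cycle_le) (auto intro: remove)
  moreover have "B = sum ?w Good + sum ?w Bad"
    unfolding B_def Good_def Bad_def using finite_short_cycle_free_subset[OF F]
    by (subst sum.union_disjoint[symmetric]) (auto intro!: arg_cong[where f = "sum ?w"])
  ultimately have "(1 - D) * B \<le> sum ?w Good"
    by (simp add: algebra_simps)
  then have "p / (1 - p) * ((1 - D) * B) \<le> p / (1 - p) * sum ?w Good"
    using p by (intro mult_left_mono) auto
  with Good_le show "p / (1 - p) * ((1 - D) * B) \<le> A"
    by linarith
qed

section \<open>The conditional edge probability\<close>

lemma Gt_cond_prob_eq_ratio: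
  fixes n l :: nat and lam :: real and P Q :: "nat set set \<Rightarrow> bool"
  defines "w \<equiv> gnp_weight n (lam / real n)" and "F \<equiv> {E \<in> short_cycle_free n l. Q E}"
  assumes p: "0 < lam / real n" "lam / real n < 1"
  shows "Gt_cond_prob n l lam P Q = sum w {E \<in> F. P E} / (sum w {E \<in> F. P E} + sum w {E \<in> F. \<not> P E})"
proof -
  define Z where "Z = sum w (short_cycle_free n l)"
  have prob: "Gt_prob n l lam R = sum w {E \<in> short_cycle_free n l. R E} / Z" for R
    unfolding Gt_prob_def Z_def w_def short_cycle_free_def by (simp add: conj_assoc)
  have "finite (short_cycle_free n l)"
    by (rule finite_short_cycle_free_subset[OF order_refl])
  moreover have "0 \<le> w E" for E
    unfolding w_def using p by (intro gnp_weight_nonneg) auto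
  ultimately have "w {} \<le> Z"
    unfolding Z_def using empty_in_short_cycle_free by (intro member_le_sum) auto
  moreover have "0 < w {}"
    unfolding w_def using p by (rule gnp_weight_pos)
  ultimately have "0 < Z" by linarith
  moreover have "sum w F = sum w {E \<in> F. P E} + sum w {E \<in> F. \<not> P E}"
    unfolding F_def by (subst sum.union_disjoint[symmetric])
      (auto intro: finite_short_cycle_free_subset intro!: arg_cong[where f = "sum w"])
  moreover have "{E \<in> short_cycle_free n l. P E \<and> Q E} = {E \<in> F. P E}"
    unfolding F_def by blast
  ultimately show ?thesis
    unfolding Gt_cond_prob_def prob F_def by simp
qed

lemma ratio_le_of_odds_le:
  fixes A B p :: real
  assumes "0 \<le> A" "0 < B" "p < 1" "A \<le> p / (1 - p) * B"
  shows "A / (A + B) \<le> p"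
proof -
  have "A * (1 - p) \<le> p * B"
    using assms(3,4) by (simp add: field_simps)
  then show ?thesis
    using assms(1,2) by (simp add: divide_le_eq algebra_simps)
qed

lemma ratio_ge_of_odds_ge:
  fixes A B p D :: real
  assumes "0 \<le> A" "0 < B" "0 < p" "p < 1" "0 \<le> D" "p / (1 - p) * ((1 - D) * B) \<le> A"
  shows "(1 - D) * p \<le> A / (A + B)"
proof -
  have "p * (1 - D) * B \<le> (1 - p) * A"
    using assms(4,6) by (simp add: field_simps)
  then have "(1 - D) * p * (A + B) \<le> A - D * p * A"
    by (simp add: algebra_simps)
  also have "\<dots> \<le> A"
    using assms(1,3,5) by simp
  finally show ?thesis
    using assms(1,2) by (simp add: le_divide_eq)
qed

lemma edge_cond_prob_bounds:
  fixes n l :: nat and lam :: real and E0 E1 :: "nat set set" and e :: "nat set"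
  defines "p \<equiv> lam / real n" and "W \<equiv> \<Union>(insert e E1)"
  defines "D \<equiv> (\<Sum>j<l. real (card W) ^ 2 * (real n + real (card W) ^ 2) ^ j * (p / (1 - p)) ^ Suc j)"
  assumes p: "0 < p" "p < 1"
    and edges: "E0 \<subseteq> all_edges n" "E1 \<subseteq> all_edges n" "e \<in> all_edges n"
    and disj: "E0 \<inter> E1 = {}" "e \<notin> E0" "e \<notin> E1"
    and acyclic: "\<not> has_short_cycle l (insert e E1)"
  shows "(1 - D) * p \<le> Gt_cond_prob n l lam (\<lambda>E. e \<in> E) (\<lambda>E. E1 \<subseteq> E \<and> E \<inter> E0 = {}) \<and>
    Gt_cond_prob n l lam (\<lambda>E. e \<in> E) (\<lambda>E. E1 \<subseteq> E \<and> E \<inter> E0 = {}) \<le> p"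
proof -
  let ?w = "gnp_weight n p"
  define F where "F = {E \<in> short_cycle_free n l. E1 \<subseteq> E \<and> E \<inter> E0 = {}}"
  define A where "A = sum ?w {E \<in> F. e \<in> E}"
  define B where "B = sum ?w {E \<in> F. e \<notin> E}"
  have prob: "Gt_cond_prob n l lam (\<lambda>E. e \<in> E) (\<lambda>E. E1 \<subseteq> E \<and> E \<inter> E0 = {}) = A / (A + B)"
    using p unfolding A_def B_def F_def p_def by (rule Gt_cond_prob_eq_ratio)
  have F: "F \<subseteq> short_cycle_free n l"
    unfolding F_def by blast
  have w_nonneg: "0 \<le> ?w E" for E
    using p by (intro gnp_weight_nonneg) auto
  have "E1 \<in> {E \<in> F. e \<notin> E}"
    using edges disj acyclic has_short_cycle_mono[of E1 "insert e E1" l]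
    unfolding F_def short_cycle_free_def by auto
  then have "?w E1 \<le> B"
    unfolding B_def using finite_short_cycle_free_subset[OF F] w_nonneg by (intro member_le_sum) auto
  then have B_pos: "0 < B"
    using gnp_weight_pos[OF p, of n E1] by linarith
  have A_nonneg: "0 \<le> A"
    unfolding A_def using w_nonneg by (simp add: sum_nonneg)
  have remove: "E - S \<in> F" if "E \<in> F" "S \<subseteq> E - E1" for E S
    using that has_short_cycle_mono[of "E - S" E l] unfolding F_def short_cycle_free_def by auto
  have add: "insert e E \<in> F" if "E \<in> F" "\<not> has_short_cycle l (insert e E)" for E
    using that edges disj unfolding F_def short_cycle_free_def by auto
  have "insert e E1 \<subseteq> all_edges n"
    using edges by simp
  note odds = edge_weight_odds_bounds[OF F remove add disj(3) this acyclic less_imp_le[OF p(1)] p(2),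
      folded A_def B_def W_def, folded D_def]
  have "0 \<le> D"
    unfolding D_def using p by (intro sum_nonneg) simp
  then show ?thesis
    unfolding prob using ratio_le_of_odds_le[OF A_nonneg B_pos p(2) odds(1)]
      ratio_ge_of_odds_ge[OF A_nonneg B_pos p _ odds(2)] by blast
qed

lemma sum_mult_power_le:
  fixes a b C :: real
  assumes "0 \<le> a" "0 \<le> b" "b \<le> C" "2 \<le> C"
  shows "(\<Sum>j<L. a * b ^ j) \<le> a * C ^ L"
proof (induction L)
  case (Suc L)
  have "a * b ^ L \<le> a * C ^ L"
    using assms by (intro mult_left_mono power_mono) auto
  then have "(\<Sum>j<Suc L. a * b ^ j) \<le> 2 * (a * C ^ L)"
    using Suc by simp
  also have "\<dots> \<le> C * (a * C ^ L)"
    using assms by (intro mult_right_mono) auto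
  also have "\<dots> = a * C ^ Suc L"
    by simp
  finally show ?case .
qed (simp add: assms(1))

lemma closing_cycle_factor_le:
  fixes n l :: nat and lam w :: real
  assumes n: "1 \<le> n" and lam: "0 < lam" "2 * lam \<le> real n"
    and growth: "32 * lam * (34 * lam + 2) ^ l \<le> real n powr (1/12)"
    and w: "0 \<le> w" "w \<le> 2 * real n powr (1/3) + 2"
  shows "(\<Sum>j<l. w ^ 2 * (real n + w ^ 2) ^ j * ((lam / real n) / (1 - lam / real n)) ^ Suc j)
    \<le> real n powr (-1/4)"
proof -
  define r where "r = (lam / real n) / (1 - lam / real n)"
  have n_pos: "0 < real n" using n by simp
  have r: "0 \<le> r" "r \<le> 2 * lam / real n"
    unfolding r_def using lam n_pos by (auto simp: field_simps)
  have "1 \<le> real n powr (1/3)"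
    using n by (intro ge_one_powr_ge_zero) auto
  then have "w \<le> 4 * real n powr (1/3)"
    using w by linarith
  then have "w ^ 2 \<le> (4 * real n powr (1/3)) ^ 2"
    using w by (intro power_mono) auto
  then have w2: "w ^ 2 \<le> 16 * real n powr (2/3)"
    using n_pos by (simp add: power_mult_distrib powr_power)
  have "real n powr (2/3) \<le> real n powr 1"
    using n by (intro powr_mono) auto
  then have "(real n + w ^ 2) * r \<le> (17 * real n) * (2 * lam / real n)"
    using w2 r n_pos by (intro mult_mono) auto
  then have base: "(real n + w ^ 2) * r \<le> 34 * lam + 2"
    using n_pos by simp
  have "(\<Sum>j<l. w ^ 2 * (real n + w ^ 2) ^ j * r ^ Suc j) = (\<Sum>j<l. w ^ 2 * r * ((real n + w ^ 2) * r) ^ j)"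
    by (simp add: power_mult_distrib mult_ac)
  also have "\<dots> \<le> w ^ 2 * r * (34 * lam + 2) ^ l"
    using base r w lam by (intro sum_mult_power_le) auto
  also have "\<dots> \<le> (16 * real n powr (2/3)) * (2 * lam / real n) * (34 * lam + 2) ^ l"
    using w2 r lam by (intro mult_right_mono mult_mono) auto
  also have "\<dots> = 32 * lam * (34 * lam + 2) ^ l * real n powr (2/3) / real n powr 1"
    using n_pos by simp
  also have "\<dots> \<le> real n powr (1/12) * real n powr (2/3) / real n powr 1"
    using growth by (intro divide_right_mono mult_right_mono) auto
  also have "\<dots> = real n powr (1/12 + 2/3 - 1)"
    by (simp only: powr_add powr_diff)
  finally show ?thesis
    unfolding r_def by simp
qed

lemma eventually_mult_power_le_powr:
  fixes f :: "nat \<Rightarrow> nat" and C K \<epsilon> :: real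
  assumes f: "(\<lambda>n. real (f n)) \<in> o(\<lambda>n. ln (real n))" and "1 < C" "0 < K" "0 < \<epsilon>"
  shows "\<forall>\<^sub>F n in sequentially. K * C ^ f n \<le> real n powr \<epsilon>"
proof -
  have lnC: "0 < ln C" using assms(2) by simp
  have "\<forall>\<^sub>F n in sequentially. norm (real (f n)) \<le> \<epsilon> / (2 * ln C) * norm (ln (real n))"
    using lnC assms(4) by (intro landau_o.smallD[OF f]) simp
  moreover have "\<forall>\<^sub>F n in sequentially. 2 * ln K / \<epsilon> \<le> ln (real n)"
    using filterlim_compose[OF ln_at_top filterlim_real_sequentially] by (simp add: filterlim_at_top)
  moreover have "\<forall>\<^sub>F n in sequentially. 1 \<le> n"
    by (rule eventually_ge_at_top)
  ultimately show ?thesis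
  proof eventually_elim
    case (elim n)
    then have "real (f n) * ln C \<le> \<epsilon> / 2 * ln (real n)"
      using lnC by (simp add: field_simps)
    moreover have "ln K \<le> \<epsilon> / 2 * ln (real n)"
      using elim(2) assms(4) by (simp add: field_simps)
    ultimately have "exp (ln K + real (f n) * ln C) \<le> exp (\<epsilon> * ln (real n))"
      by simp
    then show ?case
      using assms(2,3) elim(3) by (simp add: exp_add exp_of_nat_mult powr_def)
  qed
qed

lemma edge_cond_prob_bounds_large_n:
  fixes n l :: nat and lam :: real and E0 E1 :: "nat set set" and e :: "nat set"
  assumes n: "1 \<le> n" "0 < lam" "2 * lam \<le> real n"
    and growth: "32 * lam * (34 * lam + 2) ^ l \<le> real n powr (1/12)"
    and edges: "E0 \<subseteq> all_edges n" "E1 \<subseteq> all_edges n" "e \<in> all_edges n"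
    and disj: "E0 \<inter> E1 = {}" "e \<notin> E0" "e \<notin> E1"
    and card_E1: "real (card E1) \<le> real n powr (1/3)"
    and acyclic: "\<not> has_short_cycle l (insert e E1)"
  shows "(1 - real n powr (-1/4)) * lam / real n
      \<le> Gt_cond_prob n l lam (\<lambda>E. e \<in> E) (\<lambda>E. E1 \<subseteq> E \<and> E \<inter> E0 = {}) \<and>
    Gt_cond_prob n l lam (\<lambda>E. e \<in> E) (\<lambda>E. E1 \<subseteq> E \<and> E \<inter> E0 = {}) \<le> lam / real n"
proof -
  define p where "p = lam / real n"
  define w where "w = real (card (\<Union>(insert e E1)))"
  have p: "0 < p" "p < 1"
    unfolding p_def using n by (auto simp: field_simps)
  have "card (\<Union>(insert e E1)) \<le> 2 * card (insert e E1)"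
    using edges by (intro card_Union_edges_le) auto
  also have "\<dots> = 2 * card E1 + 2"
    using edges disj finite_all_edges by (simp add: finite_subset)
  finally have "w \<le> 2 * real n powr (1/3) + 2"
    unfolding w_def using card_E1 by linarith
  then have "(\<Sum>j<l. w ^ 2 * (real n + w ^ 2) ^ j * (p / (1 - p)) ^ Suc j) \<le> real n powr (-1/4)"
    unfolding p_def w_def using n growth by (intro closing_cycle_factor_le) auto
  then have "(1 - real n powr (-1/4)) * p \<le> (1 - (\<Sum>j<l. w ^ 2 * (real n + w ^ 2) ^ j * (p / (1 - p)) ^ Suc j)) * p"
    using p by (intro mult_right_mono) auto
  moreover have "(1 - (\<Sum>j<l. w ^ 2 * (real n + w ^ 2) ^ j * (p / (1 - p)) ^ Suc j)) * p
      \<le> Gt_cond_prob n l lam (\<lambda>E. e \<in> E) (\<lambda>E. E1 \<subseteq> E \<and> E \<inter> E0 = {}) \<and>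
    Gt_cond_prob n l lam (\<lambda>E. e \<in> E) (\<lambda>E. E1 \<subseteq> E \<and> E \<inter> E0 = {}) \<le> p"
    using p edges disj acyclic unfolding p_def w_def by (rule edge_cond_prob_bounds)
  ultimately show ?thesis
    unfolding p_def by simp
qed

theorem lemma6:
  fixes lam :: real and ell :: "nat \<Rightarrow> nat"
  assumes "lam > 0"
    and "(\<lambda>n. real (ell n)) \<in> o(\<lambda>n. ln (real n))"
  shows "\<forall>\<^sub>F n in sequentially.
    \<forall>E0 E1 e. E0 \<subseteq> all_edges n \<and> E1 \<subseteq> all_edges n \<and> e \<in> all_edges n \<and>
      E0 \<inter> E1 = {} \<and> e \<notin> E0 \<and> e \<notin> E1 \<and>
      real (card E1) \<le> real n powr (1/3) \<and>
      \<not> has_short_cycle (ell n) (insert e E1) \<longrightarrow>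
        (1 - real n powr (-1/4)) * lam / real n
          \<le> Gt_cond_prob n (ell n) lam (\<lambda>E. e \<in> E) (\<lambda>E. E1 \<subseteq> E \<and> E \<inter> E0 = {}) \<and>
        Gt_cond_prob n (ell n) lam (\<lambda>E. e \<in> E) (\<lambda>E. E1 \<subseteq> E \<and> E \<inter> E0 = {}) \<le> lam / real n"
proof -
  have "\<forall>\<^sub>F n in sequentially. 32 * lam * (34 * lam + 2) ^ ell n \<le> real n powr (1/12)"
    using assms by (intro eventually_mult_power_le_powr) auto
  moreover have "\<forall>\<^sub>F n in sequentially. 2 * lam \<le> real n"
    using filterlim_real_sequentially by (simp add: filterlim_at_top)
  moreover have "\<forall>\<^sub>F n in sequentially. 1 \<le> n"
    by (rule eventually_ge_at_top)
  ultimately show ?thesis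
    by eventually_elim (use assms(1) edge_cond_prob_bounds_large_n in blast)
qed

end
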